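(* Let $A$ be a set of integers, each at least $3$, let $A_e$ be the set of even elements of $A$, and let $k\ge 2$ with $2k\notin A$. Then, as $n\to\infty$, $$ex(n,C_{2k},\mathcal C_A)=\Theta\big(ex(n,C_{2k},\mathcal C_{A_e})\big).$$
   Context: $C_k$ denotes the cycle with $k$ vertices; for a set $B$ of integers each at least 3, $\mathcal C_B=\{C_b:b\in B\}$. For a graph $H$ and a family of graphs $\mathcal F$, $ex(n,H,\mathcal F)$ is the maximum number of subgraphs isomorphic to $H$ in an $n$-vertex graph containing no member of $\mathcal F$ as a subgraph. *)

theory Defs
  imports Main "HOL-Library.Landau_Symbols"
begin

definition graph_edges :: "nat \<Rightarrow> nat set set set" where
  "graph_edges n = Pow {e. \<exists>u v. u < n \<and> v < n \<and> u \<noteq> v \<and> e = {u, v}}"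

text \<open>F is the edge set of a cycle of length k (k distinct vertices f 0..f (k-1)).
  For k \<ge> 3 a subgraph isomorphic to C_k is determined by its edge set.\<close>

definition cycle_edges :: "nat \<Rightarrow> nat set set \<Rightarrow> bool" where
  "cycle_edges k F \<longleftrightarrow> (\<exists>f :: nat \<Rightarrow> nat. inj_on f {..<k} \<and>
       F = (\<lambda>i. {f i, f ((i + 1) mod k)}) ` {..<k})"

definition num_cycles :: "nat \<Rightarrow> nat set set \<Rightarrow> nat" where
  "num_cycles k E = card {F. F \<subseteq> E \<and> cycle_edges k F}"

definition has_cycle :: "nat \<Rightarrow> nat set set \<Rightarrow> bool" where
  "has_cycle b E \<longleftrightarrow> (\<exists>F. F \<subseteq> E \<and> cycle_edges b F)"

definition ex_cycles :: "nat \<Rightarrow> nat \<Rightarrow> nat set \<Rightarrow> nat" where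
  "ex_cycles n k B = Max {num_cycles k E | E. E \<in> graph_edges n \<and> (\<forall>b\<in>B. \<not> has_cycle b E)}"

end

theory Submission
  imports Defs
begin

text \<open>
  Every graph has a cut (the bipartite subgraph of edges crossing a vertex partition) that
  keeps at least a fraction 4^(-k) of its 2k-cycles: a fixed 2k-cycle lies in the cut of
  every set S that contains exactly its even-indexed vertices, i.e. in 2^(n-2k) of the 2^n
  cuts, so by double counting some cut does at least average.  A cut has no odd cycles, and
  its even cycles are cycles of the original graph.  Applied to an extremal graph for the
  even part of A, this gives ex(n, C_2k, C_A_e) \<le> 4^k ex(n, C_2k, C_A); the reverse
  inequality is monotonicity.
\<close>

lemma finite_graph_edges: "finite (graph_edges n)"
proof -
  have "graph_edges n \<subseteq> Pow (Pow {..<n})" unfolding graph_edges_def by auto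
  then show ?thesis by (meson finite_Pow_iff finite_lessThan finite_subset)
qed

lemma finite_of_graph_edges: "E \<in> graph_edges n \<Longrightarrow> finite E"
  unfolding graph_edges_def by (auto intro: finite_subset[of _ "Pow {..<n}"])

definition cut_edges :: "nat set \<Rightarrow> nat set set \<Rightarrow> nat set set" where
  "cut_edges S E = {e \<in> E. \<exists>u v. e = {u, v} \<and> u \<in> S \<and> v \<notin> S}"

lemma cut_edges_subset: "cut_edges S E \<subseteq> E"
  unfolding cut_edges_def by auto

lemma cut_edge_iff: "{a, c} \<in> cut_edges S E \<Longrightarrow> a \<in> S \<longleftrightarrow> c \<notin> S"
  unfolding cut_edges_def by (auto simp: doubleton_eq_iff)

lemma cut_edges_in_graph_edges: "E \<in> graph_edges n \<Longrightarrow> cut_edges S E \<in> graph_edges n"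
  using cut_edges_subset unfolding graph_edges_def by blast

lemma odd_cycle_not_in_cut:
  assumes "cycle_edges b F" "odd b"
  shows "\<not> F \<subseteq> cut_edges S E"
proof
  assume cut: "F \<subseteq> cut_edges S E"
  obtain f where F: "F = (\<lambda>i. {f i, f ((i + 1) mod b)}) ` {..<b}"
    using assms(1) unfolding cycle_edges_def by blast
  have flip: "f i \<in> S \<longleftrightarrow> f ((i + 1) mod b) \<notin> S" if "i < b" for i
    using cut_edge_iff cut F that by blast
  have alternate: "i < b \<Longrightarrow> f i \<in> S \<longleftrightarrow> (f 0 \<in> S \<longleftrightarrow> even i)" for i
  proof (induction i)
    case (Suc i)
    then show ?case using flip[of i] by auto
  qed simp
  have "b \<ge> 1" "even (b - 1)" using assms(2) by presburger+
  moreover have "(b - 1 + 1) mod b = 0" using \<open>b \<ge> 1\<close> by simp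
  ultimately show False using flip[of "b - 1"] alternate[of "b - 1"] by simp
qed

lemma has_cycle_cut_edges:
  assumes "has_cycle b (cut_edges S E)"
  shows "even b \<and> has_cycle b E"
proof -
  obtain F where "F \<subseteq> cut_edges S E" "cycle_edges b F"
    using assms unfolding has_cycle_def by blast
  then show ?thesis
    using odd_cycle_not_in_cut cut_edges_subset[of S E] unfolding has_cycle_def by blast
qed

lemma even_cycle_in_cut:
  fixes k :: nat
  assumes F: "F = (\<lambda>i. {f i, f ((i + 1) mod (2 * k))}) ` {..<2 * k}" "F \<subseteq> E"
    and S: "\<forall>i < 2 * k. f i \<in> S \<longleftrightarrow> even i"
  shows "F \<subseteq> cut_edges S E"
proof
  fix e assume "e \<in> F"
  then obtain i where i: "i < 2 * k" "e = {f i, f ((i + 1) mod (2 * k))}" using F(1) by auto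
  define j where "j = (i + 1) mod (2 * k)"
  have "j = (if i + 1 < 2 * k then i + 1 else 0)"
    using i(1) unfolding j_def by (simp add: mod_if)
  then have "j < 2 * k" "even i \<longleftrightarrow> odd j"
    using i(1) by (auto split: if_splits)
  then have "f i \<in> S \<longleftrightarrow> f j \<notin> S" using S i(1) by blast
  then have "\<exists>u v. e = {u, v} \<and> u \<in> S \<and> v \<notin> S"
    using i(2) unfolding j_def by (metis insert_commute)
  then show "e \<in> cut_edges S E" using \<open>e \<in> F\<close> F(2) unfolding cut_edges_def by blast
qed

lemma cycle_vertices_in_graph:
  assumes "F = (\<lambda>i. {f i, f ((i + 1) mod b)}) ` {..<b}" "F \<subseteq> E" "E \<in> graph_edges n"
  shows "f ` {..<b} \<subseteq> {..<n}"
proof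
  fix x assume "x \<in> f ` {..<b}"
  then obtain i where i: "i < b" "x = f i" by auto
  then have "{f i, f ((i + 1) mod b)} \<in> E" using assms(1,2) by blast
  then show "x \<in> {..<n}"
    using assms(3) i(2) unfolding graph_edges_def by (auto simp: doubleton_eq_iff)
qed

lemma even_cycle_in_many_cuts:
  assumes "cycle_edges (2 * k) F" "F \<subseteq> E" "E \<in> graph_edges n"
  shows "2 * k \<le> n" and "2 ^ (n - 2 * k) \<le> card {S \<in> Pow {..<n}. F \<subseteq> cut_edges S E}"
proof -
  obtain f where f: "inj_on f {..<2 * k}" "F = (\<lambda>i. {f i, f ((i + 1) mod (2 * k))}) ` {..<2 * k}"
    using assms(1) unfolding cycle_edges_def by blast
  define V where "V = f ` {..<2 * k}"
  define P where "P = f ` {i. i < 2 * k \<and> even i}"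
  have V: "V \<subseteq> {..<n}" "card V = 2 * k"
    using cycle_vertices_in_graph[OF f(2) assms(2,3)] f(1) by (simp_all add: V_def card_image)
  then show "2 * k \<le> n" by (metis card_lessThan card_mono finite_lessThan)
  have "P \<subseteq> V" unfolding P_def V_def by auto
  have "inj_on (\<lambda>T. T \<union> P) (Pow ({..<n} - V))"
    using \<open>P \<subseteq> V\<close> by (intro inj_onI) blast
  moreover have "(\<lambda>T. T \<union> P) ` Pow ({..<n} - V) \<subseteq> {S \<in> Pow {..<n}. F \<subseteq> cut_edges S E}"
  proof
    fix S assume "S \<in> (\<lambda>T. T \<union> P) ` Pow ({..<n} - V)"
    then obtain T where T: "T \<subseteq> {..<n} - V" "S = T \<union> P" by blast
    have "f i \<in> S \<longleftrightarrow> even i" if "i < 2 * k" for i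
    proof -
      have "f i \<notin> T" using T(1) that unfolding V_def by blast
      moreover have "f i \<in> P \<longleftrightarrow> even i"
        using f(1) that unfolding P_def by (auto dest: inj_onD)
      ultimately show ?thesis using T(2) by blast
    qed
    then have "F \<subseteq> cut_edges S E" using even_cycle_in_cut[OF f(2) assms(2)] by blast
    moreover have "S \<subseteq> {..<n}" using T \<open>P \<subseteq> V\<close> V(1) by blast
    ultimately show "S \<in> {S \<in> Pow {..<n}. F \<subseteq> cut_edges S E}" by blast
  qed
  ultimately have "card (Pow ({..<n} - V)) \<le> card {S \<in> Pow {..<n}. F \<subseteq> cut_edges S E}"
    by (intro card_inj_on_le) auto
  moreover have "card (Pow ({..<n} - V)) = 2 ^ (n - 2 * k)"
    using V by (simp add: card_Pow card_Diff_subset finite_subset)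
  ultimately show "2 ^ (n - 2 * k) \<le> card {S \<in> Pow {..<n}. F \<subseteq> cut_edges S E}" by simp
qed

lemma sum_card_swap:
  assumes "finite A" "finite B"
  shows "(\<Sum>a\<in>A. card {b \<in> B. P a b}) = (\<Sum>b\<in>B. card {a \<in> A. P a b})"
proof -
  have card_eq_sum: "card {x \<in> X. Q x} = (\<Sum>x\<in>X. if Q x then 1 else 0)"
    if "finite X" for X and Q :: "'c \<Rightarrow> bool"
    using that by (simp add: sum.If_cases Int_def)
  show ?thesis using assms by (simp add: card_eq_sum sum.swap[of _ A B])
qed

lemma exists_cut_keeping_even_cycles:
  assumes "E \<in> graph_edges n"
  shows "\<exists>S. num_cycles (2 * k) E \<le> 4 ^ k * num_cycles (2 * k) (cut_edges S E)"
proof (rule ccontr)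
  define C where "C = {F. F \<subseteq> E \<and> cycle_edges (2 * k) F}"
  have cut_cycles: "{F. F \<subseteq> cut_edges S E \<and> cycle_edges (2 * k) F} = {F \<in> C. F \<subseteq> cut_edges S E}"
    for S unfolding C_def using cut_edges_subset[of S E] by auto
  assume "\<not> ?thesis"
  then have below_avg: "4 ^ k * card {F \<in> C. F \<subseteq> cut_edges S E} < card C" for S
    unfolding num_cycles_def cut_cycles C_def by (simp add: not_le)
  then obtain F0 where "F0 \<in> C" by fastforce
  then have "2 * k \<le> n" using even_cycle_in_many_cuts(1) assms unfolding C_def by blast
  have "C \<subseteq> Pow E" unfolding C_def by blast
  then have "finite C" using finite_of_graph_edges[OF assms] by (meson finite_Pow_iff finite_subset)
  have "(4::nat) ^ k * 2 ^ (n - 2 * k) = 2 ^ n"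
  proof -
    have "(4::nat) ^ k = 2 ^ (2 * k)" by (simp add: power_mult)
    then show ?thesis using \<open>2 * k \<le> n\<close> by (simp flip: power_add)
  qed
  have "card C * 2 ^ (n - 2 * k) = (\<Sum>F\<in>C. 2 ^ (n - 2 * k))" by simp
  also have "\<dots> \<le> (\<Sum>F\<in>C. card {S \<in> Pow {..<n}. F \<subseteq> cut_edges S E})"
    by (rule sum_mono) (use even_cycle_in_many_cuts(2) assms in \<open>auto simp: C_def\<close>)
  also have "\<dots> = (\<Sum>S\<in>Pow {..<n}. card {F \<in> C. F \<subseteq> cut_edges S E})"
    by (rule sum_card_swap[symmetric]) (auto simp: \<open>finite C\<close>)
  finally have "4 ^ k * (card C * 2 ^ (n - 2 * k))
      \<le> (\<Sum>S\<in>Pow {..<n}. 4 ^ k * card {F \<in> C. F \<subseteq> cut_edges S E})"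
    unfolding sum_distrib_left[symmetric] by (rule mult_le_mono2)
  also have "\<dots> < (\<Sum>S\<in>Pow {..<n}. card C)"
    by (rule sum_strict_mono) (auto simp: below_avg)
  also have "\<dots> = 4 ^ k * (card C * 2 ^ (n - 2 * k))"
    using \<open>4 ^ k * 2 ^ (n - 2 * k) = 2 ^ n\<close> by (simp add: card_Pow)
  finally show False by simp
qed

lemma no_cycle_in_empty_graph: "0 < b \<Longrightarrow> \<not> has_cycle b {}"
proof
  assume "has_cycle b {}"
  then obtain f where "{} = (\<lambda>i. {f i, f ((i + 1) mod b)}) ` {..<b}"
    unfolding has_cycle_def cycle_edges_def by blast
  moreover assume "0 < b"
  ultimately show False by blast
qed

lemma finite_num_cycles_values:
  "finite {num_cycles k E | E. E \<in> graph_edges n \<and> P E}"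
proof -
  have "{num_cycles k E | E. E \<in> graph_edges n \<and> P E} \<subseteq> num_cycles k ` graph_edges n"
    by blast
  then show ?thesis using finite_graph_edges finite_subset by blast
qed

lemma num_cycles_le_ex_cycles:
  assumes "E \<in> graph_edges n" "\<forall>b\<in>B. \<not> has_cycle b E"
  shows "num_cycles k E \<le> ex_cycles n k B"
  unfolding ex_cycles_def using assms by (intro Max_ge[OF finite_num_cycles_values]) blast

lemma ex_cycles_attained:
  assumes "\<forall>b\<in>B. 0 < b"
  obtains E where "E \<in> graph_edges n" "\<forall>b\<in>B. \<not> has_cycle b E"
    "ex_cycles n k B = num_cycles k E"
proof -
  let ?M = "{num_cycles k E | E. E \<in> graph_edges n \<and> (\<forall>b\<in>B. \<not> has_cycle b E)}"
  have "{} \<in> graph_edges n" unfolding graph_edges_def by blast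
  then have "?M \<noteq> {}" using assms no_cycle_in_empty_graph by blast
  then have "Max ?M \<in> ?M" by (rule Max_in[OF finite_num_cycles_values])
  then show ?thesis using that unfolding ex_cycles_def by blast
qed

lemma ex_cycles_antimono:
  assumes "B \<subseteq> B'" "\<forall>b\<in>B'. 0 < b"
  shows "ex_cycles n k B' \<le> ex_cycles n k B"
proof -
  obtain E where "E \<in> graph_edges n" "\<forall>b\<in>B'. \<not> has_cycle b E"
    "ex_cycles n k B' = num_cycles k E"
    using ex_cycles_attained assms(2) .
  with assms(1) show ?thesis using num_cycles_le_ex_cycles[of E n B k] by auto
qed

lemma ex_cycles_even_part_le:
  assumes "\<forall>a\<in>A. 0 < a"
  shows "ex_cycles n (2 * k) {a \<in> A. even a} \<le> 4 ^ k * ex_cycles n (2 * k) A"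
proof -
  have "\<forall>a\<in>{a \<in> A. even a}. 0 < a" using assms by simp
  then obtain E where E: "E \<in> graph_edges n" "\<forall>b\<in>{a \<in> A. even a}. \<not> has_cycle b E"
    "ex_cycles n (2 * k) {a \<in> A. even a} = num_cycles (2 * k) E"
    by (rule ex_cycles_attained)
  obtain S where S: "num_cycles (2 * k) E \<le> 4 ^ k * num_cycles (2 * k) (cut_edges S E)"
    using exists_cut_keeping_even_cycles[OF E(1)] by blast
  have "\<forall>b\<in>A. \<not> has_cycle b (cut_edges S E)"
    using E(2) has_cycle_cut_edges by blast
  then have "num_cycles (2 * k) (cut_edges S E) \<le> ex_cycles n (2 * k) A"
    by (rule num_cycles_le_ex_cycles[OF cut_edges_in_graph_edges[OF E(1)]])
  then show ?thesis using E(3) S by (metis le_trans mult_le_mono2)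
qed

theorem lemma1:
  fixes A :: "nat set" and k :: nat
  assumes "\<forall>a\<in>A. a \<ge> 3"
    and "k \<ge> 2"
    and "2 * k \<notin> A"
  shows "(\<lambda>n. real (ex_cycles n (2 * k) A))
           \<in> \<Theta>(\<lambda>n. real (ex_cycles n (2 * k) {a \<in> A. even a}))"
proof (rule bigthetaI'[of "1 / 4 ^ k" 1])
  have pos: "\<forall>a\<in>A. 0 < a" using assms(1) by fastforce
  show "\<forall>\<^sub>F n in at_top.
      1 / 4 ^ k * norm (real (ex_cycles n (2 * k) {a \<in> A. even a}))
        \<le> norm (real (ex_cycles n (2 * k) A)) \<and>
      norm (real (ex_cycles n (2 * k) A))
        \<le> 1 * norm (real (ex_cycles n (2 * k) {a \<in> A. even a}))"
  proof (intro always_eventually allI conjI)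
    fix n
    have "real (ex_cycles n (2 * k) {a \<in> A. even a}) \<le> 4 ^ k * real (ex_cycles n (2 * k) A)"
      using ex_cycles_even_part_le[OF pos, of n k] of_nat_mono by fastforce
    then show "1 / 4 ^ k * norm (real (ex_cycles n (2 * k) {a \<in> A. even a}))
        \<le> norm (real (ex_cycles n (2 * k) A))"
      by (simp add: field_simps)
    show "norm (real (ex_cycles n (2 * k) A))
        \<le> 1 * norm (real (ex_cycles n (2 * k) {a \<in> A. even a}))"
      using ex_cycles_antimono[of "{a \<in> A. even a}" A n "2 * k"] pos by auto
  qed
qed auto

end
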